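(* Let $k\ge2$, let $\Pi\subsetneq\Sigma_k$ be a proper subshift, and let $T:\Pi\to\Sigma_k$ be the map constructed below. Then for every $y\in\Pi$, $V(T(y),\sigma)=V(y,\sigma)$.
   Context: $\Sigma_k=\{0,\dots,k-1\}^{\mathbb{N}}$ with metric $d(x,y)=\sum_{n\ge1}\delta(x_n,y_n)/2^n$ ($\delta(a,b)=0$ if $a=b$, $1$ otherwise) and shift $\sigma$. A subshift is a nonempty closed $\sigma$-invariant subset; a finite word is contained in $\Pi$ if it is a prefix of some point of $\Pi$. Construction of $T$: enumerate all finite words contained in $\Pi$ as $C_1,C_2,\dots$; fix a finite word $A_1$ not contained in $\Pi$; for $y\in\Pi$ let $Y_n$ be its first $n$ symbols; $B_n=C_nY_n\cdots Y_n$ ($Y_n$ repeated $|A_n|^2$ times), $A_{n+1}=A_nB_nA_n$; $T(y)$ is the point having every $A_n$ as prefix; the construction requires $|C_n|=o(|A_n|)$. $V(x,\sigma)$ denotes the set of weak$^*$ limit points of the empirical measures $\frac1n\sum_{i=0}^{n-1}\delta_{\sigma^i(x)}$. *)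

theory Defs
  imports "HOL-Probability.Probability"
begin

text \<open>Points of Sigma_k are sequences nat => nat; the paper's symbol x_n (n >= 1)
  is x (n - 1) here, i.e. indexing starts at 0.\<close>

definition Sigma :: "nat \<Rightarrow> (nat \<Rightarrow> nat) set" where
  "Sigma k = {x. \<forall>n. x n < k}"

definition seqdist :: "(nat \<Rightarrow> nat) \<Rightarrow> (nat \<Rightarrow> nat) \<Rightarrow> real" where
  "seqdist x y = (\<Sum>n. (if x n = y n then 0 else 1) / 2 ^ Suc n)"

definition Sigma_top :: "nat \<Rightarrow> (nat \<Rightarrow> nat) topology" where
  "Sigma_top k = Metric_space.mtopology (Sigma k) seqdist"

definition shift :: "(nat \<Rightarrow> nat) \<Rightarrow> (nat \<Rightarrow> nat)" where
  "shift x = (\<lambda>n. x (Suc n))"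

definition borel_sets_of :: "'a topology \<Rightarrow> 'a set set" where
  "borel_sets_of X = sigma_sets (topspace X) {U. openin X U}"

definition subshift :: "nat \<Rightarrow> (nat \<Rightarrow> nat) set \<Rightarrow> bool" where
  "subshift k P \<longleftrightarrow> P \<noteq> {} \<and> P \<subseteq> Sigma k \<and> closedin (Sigma_top k) P \<and> shift ` P \<subseteq> P"

definition contained :: "(nat \<Rightarrow> nat) set \<Rightarrow> nat list \<Rightarrow> bool" where
  "contained P w \<longleftrightarrow> (\<exists>x\<in>P. \<forall>i<length w. x i = w ! i)"

definition birk_avg :: "((nat \<Rightarrow> nat) \<Rightarrow> real) \<Rightarrow> (nat \<Rightarrow> nat) \<Rightarrow> nat \<Rightarrow> real" where
  "birk_avg f x n = (\<Sum>i<n. f ((shift ^^ i) x)) / real n"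

text \<open>V(x, sigma): weak-* limit (accumulation) points of the empirical measures,
  i.e. Borel probability measures mu on Sigma_k such that every weak-* basic
  neighbourhood of mu contains the n-th empirical measure for infinitely many n.\<close>
definition Vset :: "nat \<Rightarrow> (nat \<Rightarrow> nat) \<Rightarrow> (nat \<Rightarrow> nat) measure set" where
  "Vset k x = {\<mu>. prob_space \<mu> \<and> space \<mu> = Sigma k \<and> sets \<mu> = borel_sets_of (Sigma_top k) \<and>
     (\<forall>F (\<epsilon>::real). finite F \<longrightarrow> F \<subseteq> {f. continuous_map (Sigma_top k) euclideanreal f} \<longrightarrow> \<epsilon> > 0 \<longrightarrow>
        (\<exists>\<^sub>F n in sequentially. \<forall>f\<in>F. \<bar>birk_avg f x n - integral\<^sup>L \<mu> f\<bar> < \<epsilon>))}"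

text \<open>The words A_n. Aseq A1 C y 0 is the paper's A_1 and Aseq A1 C y n is A_(n+1);
  C m is the paper's C_m (m >= 1), Y_m = first m symbols of y.\<close>
fun Aseq :: "nat list \<Rightarrow> (nat \<Rightarrow> nat list) \<Rightarrow> (nat \<Rightarrow> nat) \<Rightarrow> nat \<Rightarrow> nat list" where
  "Aseq A1 C y 0 = A1"
| "Aseq A1 C y (Suc n) =
     (let A = Aseq A1 C y n; m = Suc n;
          B = C m @ concat (replicate (length A ^ 2) (map y [0..<m]))
      in A @ B @ A)"

definition Tmap :: "nat list \<Rightarrow> (nat \<Rightarrow> nat list) \<Rightarrow> (nat \<Rightarrow> nat) \<Rightarrow> (nat \<Rightarrow> nat)" where
  "Tmap A1 C y = (THE x. \<forall>n. \<forall>i<length (Aseq A1 C y n). x i = Aseq A1 C y n ! i)"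

end

theory Submission
  imports Defs
begin

text \<open>Write x = T(y). A continuous f on Sigma_k is bounded, say by M, and up to \<epsilon> depends only on
  the first L symbols. Hence along a copy of Y_n inside A_(n+1) = A_n C_n Y_n ... Y_n A_n the orbit
  of x sums f to n times the n-th empirical average of f along y, up to n \<epsilon> + 2 L M. The copies of
  Y_n fill all of A_(n+1) except for O(|A_n| + |C_n|) symbols, and A_(n+2) continues with C_(n+1)
  and copies of Y_(n+1), whose average differs from the n-th one by O(1/n). Since |C_n| = o(|A_n|),
  the t-th empirical average along x is within \<epsilon> + o(1) of the n-th one along y whenever
  |A_(n+1)| \<le> t \<le> |A_(n+2)|. There is such an interval for every n and they cover all large t,
  so the two sequences of empirical measures have the same limit points.\<close>

lemma seqdist_summable:
  "summable (\<lambda>n. (if x n = y n then 0 else 1) / (2::real) ^ Suc n)"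
  by (rule summable_comparison_test[OF _ summable_geometric[of "1/2::real"]])
     (auto simp: power_one_over intro!: exI[of _ 0] divide_left_mono)

lemma seqdist_ge:
  assumes "x i \<noteq> y i"
  shows "1 / 2 ^ Suc i \<le> seqdist x y"
proof -
  have "(\<Sum>n\<in>{i}. (if x n = y n then 0 else 1) / (2::real) ^ Suc n) \<le> seqdist x y"
    unfolding seqdist_def by (rule sum_le_suminf[OF seqdist_summable]) auto
  with assms show ?thesis by simp
qed

lemma seqdist_triangle: "seqdist x z \<le> seqdist x y + seqdist y z"
proof -
  let ?d = "\<lambda>x y n. (if x n = y n then 0 else 1) / (2::real) ^ Suc n"
  have "seqdist x z \<le> (\<Sum>n. ?d x y n + ?d y z n)"
    unfolding seqdist_def
    by (intro suminf_le summable_add seqdist_summable) (simp add: divide_right_mono)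
  also have "\<dots> = seqdist x y + seqdist y z"
    unfolding seqdist_def by (intro suminf_add[symmetric] seqdist_summable)
  finally show ?thesis .
qed

lemma Metric_space_Sigma: "Metric_space (Sigma k) seqdist"
proof
  fix x y z :: "nat \<Rightarrow> nat"
  show "0 \<le> seqdist x y"
    unfolding seqdist_def by (rule suminf_nonneg[OF seqdist_summable]) auto
  show "seqdist x y = seqdist y x"
    unfolding seqdist_def by (simp add: eq_commute)
  show "seqdist x z \<le> seqdist x y + seqdist y z"
    by (rule seqdist_triangle)
  show "seqdist x y = 0 \<longleftrightarrow> x = y"
  proof
    assume "seqdist x y = 0"
    show "x = y"
    proof (rule ccontr)
      assume "x \<noteq> y"
      then obtain i where "x i \<noteq> y i"
        by auto
      have "0 < 1 / (2::real) ^ Suc i"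
        by simp
      with seqdist_ge[of x i y] \<open>x i \<noteq> y i\<close> \<open>seqdist x y = 0\<close> show False
        by linarith
    qed
  qed (simp add: seqdist_def)
qed

lemma seqdist_le_if_agree:
  assumes "\<And>j. j < L \<Longrightarrow> x j = y j"
  shows "seqdist x y \<le> (1/2) ^ L"
proof -
  let ?d = "\<lambda>n. (if x n = y n then 0 else 1) / (2::real) ^ Suc n"
  have "seqdist x y = (\<Sum>n. ?d (n + L)) + (\<Sum>n<L. ?d n)"
    unfolding seqdist_def by (rule suminf_split_initial_segment[OF seqdist_summable])
  also have "(\<Sum>n<L. ?d n) = 0"
    using assms by simp
  also have "(\<Sum>n. ?d (n + L)) \<le> (\<Sum>n. (1/2)^L * (1/2) * (1/2::real) ^ n)"
    by (intro suminf_le summable_mult summable_geometric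
          summable_ignore_initial_segment[OF seqdist_summable])
       (auto simp: power_add power_one_over mult_ac)
  also have "\<dots> = (1/2)^L * (1/2) * (\<Sum>n. (1/2::real) ^ n)"
    by (intro suminf_mult summable_geometric) simp
  also have "\<dots> = (1/2) ^ L"
    by (simp add: suminf_geometric)
  finally show ?thesis by simp
qed

lemma agree_if_seqdist_less:
  assumes "seqdist x y < (1/2) ^ L" and "j < L"
  shows "x j = y j"
proof (rule ccontr)
  assume "x j \<noteq> y j"
  then have "1 / 2 ^ Suc j \<le> seqdist x y"
    by (rule seqdist_ge)
  moreover have "(1/2::real) ^ L \<le> (1/2) ^ Suc j"
    using assms(2) by (intro power_decreasing) auto
  ultimately show False
    using assms(1) by (simp add: power_one_over)
qed

lemma Sigma_mtotally_bounded: "Metric_space.mtotally_bounded (Sigma k) seqdist (Sigma k)"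
proof -
  interpret Sigma_metric: Metric_space "Sigma k" seqdist
    by (rule Metric_space_Sigma)
  show ?thesis
    unfolding Sigma_metric.mtotally_bounded_def
  proof (intro allI impI)
    fix e :: real
    assume "e > 0"
    then obtain L where L: "(1/2::real) ^ L < e"
      using real_arch_pow_inv[of e "1/2"] by auto
    define cut where "cut x = (\<lambda>i. if i < L then x i else 0)" for x :: "nat \<Rightarrow> nat"
    have "cut ` Sigma k \<subseteq> {z. \<forall>i. (i \<in> {..<L} \<longrightarrow> z i \<in> {..<k}) \<and> (i \<notin> {..<L} \<longrightarrow> z i = 0)}"
      by (auto simp: cut_def Sigma_def)
    then have "finite (cut ` Sigma k)"
      by (rule finite_subset) (intro finite_set_of_finite_funs; simp)
    moreover have "cut ` Sigma k \<subseteq> Sigma k"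
      by (force simp: cut_def Sigma_def)
    moreover have "Sigma k \<subseteq> (\<Union>z\<in>cut ` Sigma k. Sigma_metric.mball z e)"
    proof
      fix x
      assume x: "x \<in> Sigma k"
      have "seqdist (cut x) x \<le> (1/2) ^ L"
        by (rule seqdist_le_if_agree) (simp add: cut_def)
      with x L \<open>cut ` Sigma k \<subseteq> Sigma k\<close> show "x \<in> (\<Union>z\<in>cut ` Sigma k. Sigma_metric.mball z e)"
        by force
    qed
    ultimately show "\<exists>K. finite K \<and> K \<subseteq> Sigma k \<and> Sigma k \<subseteq> (\<Union>z\<in>K. Sigma_metric.mball z e)"
      by blast
  qed
qed

text \<open>The limit of a Cauchy sequence takes its j-th symbol from a term after which all
  terms agree on their first j + 1 symbols.\<close>
lemma Sigma_mcomplete: "Metric_space.mcomplete (Sigma k) seqdist"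
proof -
  interpret Sigma_metric: Metric_space "Sigma k" seqdist
    by (rule Metric_space_Sigma)
  show ?thesis
    unfolding Sigma_metric.mcomplete_def
  proof (intro allI impI)
    fix \<sigma>
    assume "Sigma_metric.MCauchy \<sigma>"
    then have range: "range \<sigma> \<subseteq> Sigma k"
      and "\<forall>L. \<exists>N. \<forall>n n'. N \<le> n \<longrightarrow> N \<le> n' \<longrightarrow> seqdist (\<sigma> n) (\<sigma> n') < (1/2) ^ L"
      unfolding Sigma_metric.MCauchy_def by auto
    then obtain N where N: "\<And>L n n'. N L \<le> n \<Longrightarrow> N L \<le> n' \<Longrightarrow> seqdist (\<sigma> n) (\<sigma> n') < (1/2) ^ L"
      by metis
    define z where "z j = \<sigma> (N (Suc j)) j" for j
    have z: "z \<in> Sigma k"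
      using range by (auto simp: z_def Sigma_def)
    have "limitin Sigma_metric.mtopology \<sigma> z sequentially"
      unfolding Sigma_metric.limitin_metric
    proof (intro conjI z allI impI)
      fix e :: real
      assume "e > 0"
      then obtain L where L: "(1/2::real) ^ L < e"
        using real_arch_pow_inv[of e "1/2"] by auto
      have "seqdist (\<sigma> n) z < e" if n: "(\<Sum>j<L. N (Suc j)) \<le> n" for n
      proof -
        have "seqdist (\<sigma> n) z \<le> (1/2) ^ L"
        proof (rule seqdist_le_if_agree)
          fix j
          assume "j < L"
          then have "N (Suc j) \<le> n"
            using n member_le_sum[of j "{..<L}" "\<lambda>j. N (Suc j)"] by simp
          then have "seqdist (\<sigma> n) (\<sigma> (N (Suc j))) < (1/2) ^ Suc j"
            by (intro N) auto
          then show "\<sigma> n j = z j"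
            unfolding z_def by (rule agree_if_seqdist_less) simp
        qed
        with L show ?thesis by linarith
      qed
      with range show "\<forall>\<^sub>F n in sequentially. \<sigma> n \<in> Sigma k \<and> seqdist (\<sigma> n) z < e"
        unfolding eventually_sequentially by blast
    qed
    then show "\<exists>x. limitin Sigma_metric.mtopology \<sigma> x sequentially"
      by blast
  qed
qed

lemma compact_space_Sigma_top: "compact_space (Sigma_top k)"
  unfolding Sigma_top_def
    Metric_space.compact_space_eq_mcomplete_mtotally_bounded[OF Metric_space_Sigma]
  using Sigma_mcomplete Sigma_mtotally_bounded by blast

lemma topspace_Sigma_top [simp]: "topspace (Sigma_top k) = Sigma k"
  by (simp add: Sigma_top_def Metric_space.topspace_mtopology[OF Metric_space_Sigma])

lemma continuous_map_Sigma_top_bounded: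
  assumes "continuous_map (Sigma_top k) euclideanreal f"
  obtains M where "0 \<le> M" and "\<And>u. u \<in> Sigma k \<Longrightarrow> \<bar>f u\<bar> \<le> M"
proof -
  have "compactin euclideanreal (f ` Sigma k)"
    using image_compactin[OF compact_space_Sigma_top[unfolded compact_space_def] assms] by simp
  then obtain M where "\<forall>u\<in>Sigma k. \<bar>f u\<bar> \<le> M"
    by (auto dest!: compact_imp_bounded simp: bounded_iff)
  then show ?thesis
    using that[of "max M 0"] by force
qed

lemma continuous_map_Sigma_top_cylinder:
  assumes "continuous_map (Sigma_top k) euclideanreal f" and "0 < e"
  obtains L where "\<And>u v. u \<in> Sigma k \<Longrightarrow> v \<in> Sigma k \<Longrightarrow> (\<And>j. j < L \<Longrightarrow> u j = v j) \<Longrightarrow>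
                         \<bar>f u - f v\<bar> < e"
proof -
  interpret Sigma_metric: Metric_space "Sigma k" seqdist
    by (rule Metric_space_Sigma)
  have "uniformly_continuous_map (metric (Sigma k, seqdist)) euclidean_metric f"
    using compact_space_Sigma_top[of k] assms(1)
    by (intro continuous_imp_uniformly_continuous_map) (simp add: Sigma_top_def)
  then obtain d where "0 < d"
    and d: "\<And>u v. u \<in> Sigma k \<Longrightarrow> v \<in> Sigma k \<Longrightarrow> seqdist v u < d \<Longrightarrow> dist (f v) (f u) < e"
    unfolding uniformly_continuous_map_def using assms(2) by auto
  obtain L where L: "(1/2::real) ^ L < d"
    using real_arch_pow_inv[OF \<open>0 < d\<close>, of "1/2"] by auto
  show ?thesis
  proof (rule that)
    fix u v
    assume "u \<in> Sigma k" "v \<in> Sigma k" "\<And>j. j < L \<Longrightarrow> u j = v j"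
    with L d[of v u] seqdist_le_if_agree[of L u v] show "\<bar>f u - f v\<bar> < e"
      by (simp add: dist_real_def)
  qed
qed

lemma nth_concat_replicate:
  assumes "j < q" and "r < length w"
  shows "concat (replicate q w) ! (j * length w + r) = w ! r"
  using assms
proof (induction j arbitrary: q)
  case 0
  then show ?case
    by (cases q) (auto simp: nth_append)
next
  case (Suc j)
  then show ?case
    by (cases q) (auto simp: nth_append add.assoc)
qed

lemma length_Aseq_Suc:
  "length (Aseq A1 C y (Suc n)) =
     2 * length (Aseq A1 C y n) + length (C (Suc n)) + length (Aseq A1 C y n) ^ 2 * Suc n"
  by (simp add: Let_def length_concat sum_list_replicate)

lemma Aseq_prefix: "n \<le> m \<Longrightarrow> \<exists>zs. Aseq A1 C y m = Aseq A1 C y n @ zs"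
  by (induction m rule: dec_induct) (auto simp: Let_def)

declare Aseq.simps(2) [simp del]

lemma nth_Aseq_agree:
  assumes "i < length (Aseq A1 C y n)" and "i < length (Aseq A1 C y m)"
  shows "Aseq A1 C y n ! i = Aseq A1 C y m ! i"
  using Aseq_prefix[of n m A1 C y] Aseq_prefix[of m n A1 C y] assms
  by (cases "n \<le> m") (auto simp: nth_append)

lemma length_Aseq_gt: "A1 \<noteq> [] \<Longrightarrow> n < length (Aseq A1 C y n)"
  by (induction n) (auto simp: length_Aseq_Suc)

lemma strict_mono_length_Aseq:
  assumes "A1 \<noteq> []"
  shows "strict_mono (\<lambda>n. length (Aseq A1 C y n))"
  unfolding strict_mono_Suc_iff
proof
  fix n
  have "0 < length (Aseq A1 C y n)"
    using length_Aseq_gt[of A1 n C y] assms by linarith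
  then show "length (Aseq A1 C y n) < length (Aseq A1 C y (Suc n))"
    by (simp add: length_Aseq_Suc)
qed

lemma Tmap_nth:
  assumes "A1 \<noteq> []" and "i < length (Aseq A1 C y n)"
  shows "Tmap A1 C y i = Aseq A1 C y n ! i"
proof -
  have diag: "\<forall>n. \<forall>i<length (Aseq A1 C y n). Aseq A1 C y i ! i = Aseq A1 C y n ! i"
    using nth_Aseq_agree length_Aseq_gt[OF assms(1)] by blast
  have "Tmap A1 C y = (\<lambda>i. Aseq A1 C y i ! i)"
    unfolding Tmap_def
  proof (rule the_equality)
    fix x
    assume "\<forall>n. \<forall>i<length (Aseq A1 C y n). x i = Aseq A1 C y n ! i"
    then show "x = (\<lambda>i. Aseq A1 C y i ! i)"
      using length_Aseq_gt[OF assms(1)] by auto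
  qed (use diag in simp)
  with diag assms(2) show ?thesis
    by simp
qed

lemma set_Aseq_subset:
  assumes "set A1 \<subseteq> {..<k}" and "\<And>m. 0 < m \<Longrightarrow> set (C m) \<subseteq> {..<k}" and "y \<in> Sigma k"
  shows "set (Aseq A1 C y n) \<subseteq> {..<k}"
  using assms by (induction n) (auto simp: Aseq.simps(2) Let_def Sigma_def)

lemma Tmap_in_Sigma:
  assumes "A1 \<noteq> []" and "set A1 \<subseteq> {..<k}" and "\<And>m. 0 < m \<Longrightarrow> set (C m) \<subseteq> {..<k}"
    and "y \<in> Sigma k"
  shows "Tmap A1 C y \<in> Sigma k"
proof -
  have "Tmap A1 C y i \<in> set (Aseq A1 C y i)" for i
    using Tmap_nth[OF assms(1) length_Aseq_gt[OF assms(1)]] length_Aseq_gt[OF assms(1)] by simp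
  then show ?thesis
    using set_Aseq_subset[of A1 k C, OF assms(2-4)] by (auto simp: Sigma_def)
qed

lemma Tmap_periodic:
  assumes "A1 \<noteq> []" and "j < length (Aseq A1 C y n) ^ 2" and "r < Suc n"
  shows "Tmap A1 C y (length (Aseq A1 C y n) + length (C (Suc n)) + j * Suc n + r) = y r"
proof -
  let ?a = "length (Aseq A1 C y n)" and ?c = "length (C (Suc n))" and ?Y = "map y [0..<Suc n]"
  have "j * Suc n + r < Suc j * Suc n"
    using assms(3) by simp
  also have "\<dots> \<le> ?a ^ 2 * Suc n"
    using assms(2) by (intro mult_right_mono) auto
  finally have jr: "j * Suc n + r < ?a ^ 2 * Suc n" .
  then have "Tmap A1 C y (?a + ?c + j * Suc n + r)
      = Aseq A1 C y (Suc n) ! (?a + ?c + j * Suc n + r)"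
    by (intro Tmap_nth assms(1)) (simp add: length_Aseq_Suc)
  also have "\<dots> = concat (replicate (?a ^ 2) ?Y) ! (j * length ?Y + r)"
    using jr
    by (simp add: Aseq.simps(2) Let_def nth_append length_concat sum_list_replicate add.assoc)
  also have "\<dots> = y r"
    using assms by (subst nth_concat_replicate) (simp_all del: upt_Suc)
  finally show ?thesis .
qed

definition orbit_sum :: "((nat \<Rightarrow> nat) \<Rightarrow> real) \<Rightarrow> (nat \<Rightarrow> nat) \<Rightarrow> nat \<Rightarrow> nat \<Rightarrow> real" where
  "orbit_sum f x s l = (\<Sum>i<l. f ((shift ^^ (s + i)) x))"

lemma shift_funpow_apply [simp]: "(shift ^^ i) x j = x (j + i)"
  by (induction i arbitrary: x) (simp_all add: shift_def funpow_swap1)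

lemma shift_funpow_in_Sigma: "x \<in> Sigma k \<Longrightarrow> (shift ^^ i) x \<in> Sigma k"
  by (simp add: Sigma_def)

lemma birk_avg_eq_orbit_sum: "birk_avg f x n = orbit_sum f x 0 n / n"
  by (simp add: birk_avg_def orbit_sum_def)

lemma orbit_sum_0 [simp]: "orbit_sum f x s 0 = 0"
  by (simp add: orbit_sum_def)

lemma orbit_sum_add: "orbit_sum f x s (l + l') = orbit_sum f x s l + orbit_sum f x (s + l) l'"
  unfolding orbit_sum_def by (induction l') (simp_all add: add.assoc)

lemma orbit_sum_Suc: "orbit_sum f x s (Suc l) = orbit_sum f x s l + f ((shift ^^ (s + l)) x)"
  by (simp add: orbit_sum_def)

locale orbit_comparison =
  fixes k :: nat and f :: "(nat \<Rightarrow> nat) \<Rightarrow> real" and M \<epsilon> :: real and L :: nat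
    and x y :: "nat \<Rightarrow> nat"
  assumes x_in_Sigma: "x \<in> Sigma k" and y_in_Sigma: "y \<in> Sigma k"
    and bounded: "\<And>u. u \<in> Sigma k \<Longrightarrow> \<bar>f u\<bar> \<le> M"
    and cylinder: "\<And>u v. u \<in> Sigma k \<Longrightarrow> v \<in> Sigma k \<Longrightarrow> (\<And>j. j < L \<Longrightarrow> u j = v j) \<Longrightarrow>
                     \<bar>f u - f v\<bar> \<le> \<epsilon>"
begin

lemma M_nonneg: "0 \<le> M"
  using bounded[OF x_in_Sigma] by linarith

lemma \<epsilon>_nonneg: "0 \<le> \<epsilon>"
  using cylinder[OF x_in_Sigma x_in_Sigma] by simp

lemma abs_orbit_sum_le: "z \<in> Sigma k \<Longrightarrow> \<bar>orbit_sum f z s l\<bar> \<le> l * M"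
proof -
  assume "z \<in> Sigma k"
  then have "(\<Sum>i<l. \<bar>f ((shift ^^ (s + i)) z)\<bar>) \<le> of_nat (card {..<l}) * M"
    by (intro sum_bounded_above) (simp add: bounded shift_funpow_in_Sigma)
  then show ?thesis
    unfolding orbit_sum_def by (intro order_trans[OF sum_abs]) simp
qed

lemma abs_birk_avg_le: "z \<in> Sigma k \<Longrightarrow> \<bar>birk_avg f z n\<bar> \<le> M"
  using abs_orbit_sum_le[of z 0 n] M_nonneg
  by (cases "n = 0") (auto simp: birk_avg_eq_orbit_sum field_simps)

text \<open>Appending the n-th point moves the average by (f(\<sigma>^n z) - average) / (n + 1).\<close>
lemma abs_birk_avg_Suc_diff:
  assumes "z \<in> Sigma k"
  shows "\<bar>birk_avg f z (Suc n) - birk_avg f z n\<bar> \<le> 2 * M / Suc n"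
proof -
  let ?h = "f ((shift ^^ n) z)" and ?E = "birk_avg f z n"
  have "orbit_sum f z 0 n = n * ?E"
    by (simp add: birk_avg_eq_orbit_sum)
  then have "birk_avg f z (Suc n) = (n * ?E + ?h) / Suc n"
    by (simp add: birk_avg_eq_orbit_sum[of f z "Suc n"] orbit_sum_Suc)
  then have "birk_avg f z (Suc n) - ?E = (?h - ?E) / Suc n"
    by (simp add: field_simps)
  moreover have "\<bar>?h - ?E\<bar> \<le> 2 * M"
    using bounded[OF shift_funpow_in_Sigma[OF assms, of n]] abs_birk_avg_le[OF assms, of n]
      abs_triangle_ineq4[of ?h ?E] by linarith
  ultimately show ?thesis
    by (simp add: abs_div divide_right_mono)
qed

definition deviation :: "nat \<Rightarrow> nat \<Rightarrow> real \<Rightarrow> real" where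
  "deviation s l e = orbit_sum f x s l - l * e"

lemma deviation_add: "deviation s (l + l') e = deviation s l e + deviation (s + l) l' e"
  by (simp add: deviation_def orbit_sum_add algebra_simps)

lemma abs_deviation_le:
  assumes "\<bar>e\<bar> \<le> M"
  shows "\<bar>deviation s l e\<bar> \<le> 2 * M * l"
proof -
  have "\<bar>l * e\<bar> \<le> l * M"
    using assms by (simp add: abs_mult mult_left_mono)
  then have "\<bar>deviation s l e\<bar> \<le> l * M + l * M"
    using abs_orbit_sum_le[OF x_in_Sigma, of s l] abs_triangle_ineq4[of "orbit_sum f x s l" "l * e"]
    unfolding deviation_def by linarith
  then show ?thesis
    by (simp add: algebra_simps)
qed

lemma abs_orbit_sum_diff_matching:
  assumes match: "\<And>r. r < p \<Longrightarrow> x (s + r) = y r"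
  shows "\<bar>orbit_sum f x s p - orbit_sum f y 0 p\<bar> \<le> p * \<epsilon> + 2 * real L * M"
proof -
  let ?d = "\<lambda>r. f ((shift ^^ (s + r)) x) - f ((shift ^^ r) y)"
  have close: "\<bar>?d r\<bar> \<le> \<epsilon>" if "r + L \<le> p" for r
  proof (rule cylinder[OF shift_funpow_in_Sigma[OF x_in_Sigma]
                          shift_funpow_in_Sigma[OF y_in_Sigma]])
    fix j
    assume "j < L"
    with that match[of "j + r"] show "(shift ^^ (s + r)) x j = (shift ^^ r) y j"
      by (simp add: ac_simps)
  qed
  have far: "\<bar>?d r\<bar> \<le> 2 * M" for r
    using bounded[OF shift_funpow_in_Sigma[OF x_in_Sigma, of "s + r"]]
      bounded[OF shift_funpow_in_Sigma[OF y_in_Sigma, of r]]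
      abs_triangle_ineq4[of "f ((shift ^^ (s + r)) x)" "f ((shift ^^ r) y)"]
    by linarith
  have term_le: "\<bar>?d r\<bar> \<le> \<epsilon> + (if p < r + L then 2 * M else 0)" for r
    using close[of r] far[of r] \<epsilon>_nonneg by (cases "p < r + L") auto
  have "\<bar>orbit_sum f x s p - orbit_sum f y 0 p\<bar> \<le> (\<Sum>r<p. \<bar>?d r\<bar>)"
    unfolding orbit_sum_def by (simp add: sum_subtractf[symmetric] sum_abs)
  also have "\<dots> \<le> (\<Sum>r<p. \<epsilon> + (if p < r + L then 2 * M else 0))"
    using term_le by (rule sum_mono)
  also have "\<dots> = p * \<epsilon> + 2 * M * card {r\<in>{..<p}. p < r + L}"
    by (simp add: sum.distrib sum.If_cases Int_def)
  also have "\<dots> \<le> p * \<epsilon> + 2 * M * L"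
  proof -
    have "card {r\<in>{..<p}. p < r + L} \<le> card {p - L..<p}"
      by (intro card_mono) auto
    then show ?thesis
      using M_nonneg by (simp add: mult_left_mono)
  qed
  finally show ?thesis
    by (simp add: mult_ac)
qed

lemma abs_deviation_periodic:
  assumes per: "\<And>j r. j < J \<Longrightarrow> r < p \<Longrightarrow> x (s + j * p + r) = y r"
    and "0 < p" and "u \<le> J * p"
  shows "\<bar>deviation s u (birk_avg f y p)\<bar> \<le> u * (\<epsilon> + 2 * real L * M / p) + 2 * M * p"
proof -
  let ?E = "birk_avg f y p"
  have full: "\<bar>deviation s (q * p) ?E\<bar> \<le> q * (p * \<epsilon> + 2 * real L * M)" if "q \<le> J" for q
    using that
  proof (induction q)
    case (Suc q)
    have "deviation (s + q * p) p ?E = orbit_sum f x (s + q * p) p - orbit_sum f y 0 p"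
      using \<open>0 < p\<close> by (simp add: deviation_def birk_avg_eq_orbit_sum)
    also have "\<bar>\<dots>\<bar> \<le> p * \<epsilon> + 2 * real L * M"
      by (rule abs_orbit_sum_diff_matching) (use Suc.prems per[of q] in \<open>simp add: add.assoc\<close>)
    finally have "\<bar>deviation (s + q * p) p ?E\<bar> \<le> p * \<epsilon> + 2 * real L * M" .
    with Suc show ?case
      using deviation_add[of s "q * p" p ?E] by (simp add: add.commute algebra_simps)
  qed (simp add: deviation_def)
  define q where "q = u div p"
  have u: "u = q * p + u mod p"
    by (simp add: q_def)
  have coeff_nonneg: "0 \<le> \<epsilon> + 2 * real L * M / p"
    using \<epsilon>_nonneg M_nonneg by simp
  have "q \<le> J"
    using \<open>u \<le> J * p\<close> \<open>0 < p\<close> unfolding q_def by (metis div_le_mono div_mult_self_is_m)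
  have "real q * (p * \<epsilon> + 2 * real L * M) = real (q * p) * (\<epsilon> + 2 * real L * M / p)"
    using \<open>0 < p\<close> by (simp add: field_simps)
  also have "\<dots> \<le> u * (\<epsilon> + 2 * real L * M / p)"
    using coeff_nonneg u by (intro mult_right_mono) linarith+
  finally have "\<bar>deviation s (q * p) ?E\<bar> \<le> u * (\<epsilon> + 2 * real L * M / p)"
    using full[OF \<open>q \<le> J\<close>] by linarith
  moreover have "\<bar>deviation (s + q * p) (u mod p) ?E\<bar> \<le> 2 * M * (u mod p)"
    by (rule abs_deviation_le[OF abs_birk_avg_le[OF y_in_Sigma]])
  moreover have "2 * M * (u mod p) \<le> 2 * M * p"
    using M_nonneg \<open>0 < p\<close> by (intro mult_left_mono) auto
  ultimately show ?thesis
    using deviation_add[of s "q * p" "u mod p" ?E] u by simp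
qed

lemma abs_deviation_block:
  assumes per: "\<And>j r. j < J \<Longrightarrow> r < p \<Longrightarrow> x (s + c + j * p + r) = y r"
    and "0 < p" and "u \<le> c + J * p"
  shows "\<bar>deviation s u (birk_avg f y p)\<bar>
           \<le> u * (\<epsilon> + 2 * real L * M / p) + 2 * M * (real c + real p)"
proof (cases "u \<le> c")
  case True
  have "\<bar>deviation s u (birk_avg f y p)\<bar> \<le> 2 * M * u"
    by (rule abs_deviation_le[OF abs_birk_avg_le[OF y_in_Sigma]])
  also have "\<dots> \<le> 2 * M * (real c + real p)"
    using True M_nonneg by (intro mult_left_mono) auto
  finally have "\<bar>deviation s u (birk_avg f y p)\<bar> \<le> 2 * M * (real c + real p)" .
  moreover have "0 \<le> u * (\<epsilon> + 2 * real L * M / p)"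
    using \<epsilon>_nonneg M_nonneg by simp
  ultimately show ?thesis
    by linarith
next
  case False
  have "\<bar>deviation (s + c) (u - c) (birk_avg f y p)\<bar>
      \<le> (u - c) * (\<epsilon> + 2 * real L * M / p) + 2 * M * p"
    using assms False by (intro abs_deviation_periodic[where J = J]) (auto simp: add.assoc)
  moreover have "\<bar>deviation s c (birk_avg f y p)\<bar> \<le> 2 * M * c"
    by (rule abs_deviation_le[OF abs_birk_avg_le[OF y_in_Sigma]])
  moreover have "real (u - c) * (\<epsilon> + 2 * real L * M / p) \<le> u * (\<epsilon> + 2 * real L * M / p)"
    using \<epsilon>_nonneg M_nonneg by (intro mult_right_mono) auto
  ultimately show ?thesis
    using deviation_add[of s c "u - c" "birk_avg f y p"] False by (simp add: algebra_simps)
qed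

end

locale Tmap_comparison = orbit_comparison +
  fixes A1 :: "nat list" and C :: "nat \<Rightarrow> nat list"
  assumes A1_nonempty: "A1 \<noteq> []" and x_eq_Tmap: "x = Tmap A1 C y"
begin

abbreviation \<alpha> :: "nat \<Rightarrow> nat" where
  "\<alpha> n \<equiv> length (Aseq A1 C y n)"

abbreviation \<gamma> :: "nat \<Rightarrow> nat" where
  "\<gamma> n \<equiv> length (C n)"

lemma abs_deviation_Tmap_block:
  assumes "u \<le> \<gamma> (Suc n) + \<alpha> n ^ 2 * Suc n"
  shows "\<bar>deviation (\<alpha> n) u (birk_avg f y (Suc n))\<bar>
           \<le> u * (\<epsilon> + 2 * real L * M / Suc n) + 2 * M * (real (\<gamma> (Suc n)) + Suc n)"
  using assms
proof (intro abs_deviation_block[where J = "\<alpha> n ^ 2"])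
  show "x (\<alpha> n + \<gamma> (Suc n) + j * Suc n + r) = y r" if "j < \<alpha> n ^ 2" and "r < Suc n" for j r
    unfolding x_eq_Tmap using A1_nonempty that by (rule Tmap_periodic)
qed simp_all

lemma abs_deviation_Tmap_block_prev_avg:
  assumes "u \<le> \<gamma> (Suc (Suc m)) + \<alpha> (Suc m) ^ 2 * Suc (Suc m)"
  shows "\<bar>deviation (\<alpha> (Suc m)) u (birk_avg f y (Suc m))\<bar>
           \<le> u * (\<epsilon> + (2 * real L * M + 2 * M) / Suc m)
              + 2 * M * (real (\<gamma> (Suc (Suc m))) + Suc (Suc m))"
proof -
  let ?A = "\<alpha> (Suc m)" and ?E = "birk_avg f y (Suc m)" and ?E' = "birk_avg f y (Suc (Suc m))"
  have "\<bar>deviation ?A u ?E\<bar> = \<bar>deviation ?A u ?E' + u * (?E' - ?E)\<bar>"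
    by (simp add: deviation_def algebra_simps)
  also have "\<dots> \<le> \<bar>deviation ?A u ?E'\<bar> + u * \<bar>?E' - ?E\<bar>"
    using abs_triangle_ineq[of "deviation ?A u ?E'" "u * (?E' - ?E)"] by (simp add: abs_mult)
  also have "\<dots> \<le> (u * (\<epsilon> + 2 * real L * M / Suc (Suc m))
                    + 2 * M * (real (\<gamma> (Suc (Suc m))) + Suc (Suc m)))
                  + u * (2 * M / Suc (Suc m))"
    by (intro add_mono abs_deviation_Tmap_block[OF assms] mult_left_mono
        abs_birk_avg_Suc_diff y_in_Sigma) simp
  also have "\<dots> = u * (\<epsilon> + (2 * real L * M + 2 * M) / Suc (Suc m))
                    + 2 * M * (real (\<gamma> (Suc (Suc m))) + Suc (Suc m))"
    by (simp add: algebra_simps add_divide_distrib)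
  also have "u * (\<epsilon> + (2 * real L * M + 2 * M) / Suc (Suc m))
      \<le> u * (\<epsilon> + (2 * real L * M + 2 * M) / Suc m)"
    using M_nonneg by (intro mult_left_mono add_left_mono divide_left_mono) auto
  finally show ?thesis
    by simp
qed

lemma abs_deviation_Tmap_prefix:
  fixes m v w :: nat
  defines "E \<equiv> birk_avg f y (Suc m)" and "\<delta> \<equiv> \<epsilon> + (2 * real L * M + 2 * M) / Suc m"
  assumes v: "v \<le> \<gamma> (Suc (Suc m)) + \<alpha> (Suc m) ^ 2 * Suc (Suc m)"
  shows "\<bar>deviation 0 (\<alpha> (Suc m) + v + w) E\<bar>
           \<le> real (\<alpha> (Suc m) + v) * \<delta>
              + 2 * M * (2 * \<alpha> m + w + \<gamma> (Suc m) + \<gamma> (Suc (Suc m)) + 2 * m + 3)"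
proof -
  define a b A where "a = \<alpha> m" and "b = \<gamma> (Suc m) + a ^ 2 * Suc m" and "A = \<alpha> (Suc m)"
  \<comment> \<open>in the paper's notation: the blocks A_(m+1), C_(m+1) Y_(m+1) ... Y_(m+1), A_(m+1),
    C_(m+2) Y_(m+2) ..., and the start of the final copy of A_(m+2)\<close>
  have A: "A = a + b + a"
    by (simp add: a_def b_def A_def length_Aseq_Suc)
  have \<delta>_nonneg: "0 \<le> \<delta>"
    unfolding \<delta>_def using \<epsilon>_nonneg M_nonneg by simp
  have "\<bar>deviation a b E\<bar> \<le> b * (\<epsilon> + 2 * real L * M / Suc m) + 2 * M * (real (\<gamma> (Suc m)) + Suc m)"
    unfolding a_def E_def by (rule abs_deviation_Tmap_block) (simp add: b_def a_def)
  also have "b * (\<epsilon> + 2 * real L * M / Suc m) \<le> b * \<delta>"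
    unfolding \<delta>_def using M_nonneg by (intro mult_left_mono add_left_mono divide_right_mono) auto
  finally have first: "\<bar>deviation a b E\<bar> \<le> b * \<delta> + 2 * M * (real (\<gamma> (Suc m)) + Suc m)"
    by simp
  have second: "\<bar>deviation A v E\<bar> \<le> v * \<delta> + 2 * M * (real (\<gamma> (Suc (Suc m))) + Suc (Suc m))"
    unfolding A_def E_def \<delta>_def by (rule abs_deviation_Tmap_block_prev_avg[OF v])
  have trivial: "\<bar>deviation s l E\<bar> \<le> 2 * M * l" for s l
    unfolding E_def by (rule abs_deviation_le[OF abs_birk_avg_le[OF y_in_Sigma]])
  have "deviation 0 (A + v + w) E = deviation 0 a E + deviation a b E + deviation (a + b) a E
      + deviation A v E + deviation (A + v) w E"
    unfolding A by (simp add: deviation_add)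
  then have "\<bar>deviation 0 (A + v + w) E\<bar>
      \<le> \<bar>deviation 0 a E\<bar> + \<bar>deviation a b E\<bar> + \<bar>deviation (a + b) a E\<bar>
         + \<bar>deviation A v E\<bar> + \<bar>deviation (A + v) w E\<bar>"
    by (auto intro!: order_trans[OF abs_triangle_ineq] add_right_mono)
  also have "\<dots> \<le> 2 * M * a + (b * \<delta> + 2 * M * (real (\<gamma> (Suc m)) + Suc m)) + 2 * M * a
      + (v * \<delta> + 2 * M * (real (\<gamma> (Suc (Suc m))) + Suc (Suc m))) + 2 * M * w"
    by (intro add_mono first second trivial)
  also have "\<dots> = (b * \<delta> + v * \<delta>) + (2 * M * a + 2 * M * a + 2 * M * w
      + 2 * M * (real (\<gamma> (Suc m)) + Suc m) + 2 * M * (real (\<gamma> (Suc (Suc m))) + Suc (Suc m)))"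
    by (simp only: ac_simps)
  also have "\<dots> \<le> real (A + v) * \<delta> + 2 * M * (2 * a + w + \<gamma> (Suc m) + \<gamma> (Suc (Suc m)) + 2 * m + 3)"
  proof (rule add_mono)
    show "real b * \<delta> + real v * \<delta> \<le> real (A + v) * \<delta>"
      using \<delta>_nonneg by (simp add: A distrib_right[symmetric] mult_right_mono)
    show "2 * M * a + 2 * M * a + 2 * M * w + 2 * M * (real (\<gamma> (Suc m)) + Suc m)
        + 2 * M * (real (\<gamma> (Suc (Suc m))) + Suc (Suc m))
        \<le> 2 * M * (2 * a + w + \<gamma> (Suc m) + \<gamma> (Suc (Suc m)) + 2 * m + 3)"
      by (rule eq_refl) (simp add: algebra_simps)
  qed
  finally show ?thesis
    unfolding A_def a_def .
qed

lemma Tmap_prefix_overhead: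
  assumes "\<alpha> (Suc m) \<le> t" and "Suc m * w \<le> t"
  shows "Suc m * (2 * \<alpha> m + w + 2 * m + 3) \<le> 6 * t"
proof -
  have "Suc m \<le> \<alpha> m"
    using length_Aseq_gt[OF A1_nonempty, of m C y] by simp
  have "\<alpha> m * Suc m \<le> \<alpha> m ^ 2 * Suc m"
    by (intro mult_right_mono) (simp_all add: power2_eq_square le_square)
  also have "\<dots> \<le> t"
    using assms(1) by (simp add: length_Aseq_Suc)
  finally have at: "\<alpha> m * Suc m \<le> t" .
  have "Suc m * (2 * m + 3) \<le> 3 * (Suc m * Suc m)"
    by (simp add: algebra_simps)
  also have "\<dots> \<le> 3 * (\<alpha> m * Suc m)"
    using \<open>Suc m \<le> \<alpha> m\<close> by (intro mult_le_mono2 mult_le_mono1)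
  finally have "Suc m * (2 * m + 3) \<le> 3 * t"
    using at by linarith
  moreover have "Suc m * (2 * \<alpha> m + w + 2 * m + 3)
      = 2 * (\<alpha> m * Suc m) + Suc m * w + Suc m * (2 * m + 3)"
    by (simp add: algebra_simps)
  ultimately show ?thesis
    using at assms(2) by linarith
qed

lemma birk_avg_diff_eq_deviation: "0 < t \<Longrightarrow> birk_avg f x t - e = deviation 0 t e / t"
  by (simp add: birk_avg_eq_orbit_sum deviation_def field_simps)

lemma Tmap_prefix_split:
  assumes "\<alpha> (Suc m) \<le> t" and "t \<le> \<alpha> (Suc (Suc m))"
  obtains v w where "t = \<alpha> (Suc m) + v + w"
    and "v \<le> \<gamma> (Suc (Suc m)) + \<alpha> (Suc m) ^ 2 * Suc (Suc m)" and "Suc m * w \<le> t"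
proof -
  define A T where "A = \<alpha> (Suc m)" and "T = \<gamma> (Suc (Suc m)) + A ^ 2 * Suc (Suc m)"
  define v w where "v = min (t - A) T" and "w = t - A - v"
  \<comment> \<open>w > 0 only inside the final copy of A_(m+2) (paper's notation), which starts after at
    least A^2 positions\<close>
  have "Suc m * w \<le> t"
  proof (cases "w = 0")
    case False
    then have "w \<le> A" and "A + T \<le> t"
      using assms(2) by (auto simp: v_def w_def A_def T_def length_Aseq_Suc)
    have "Suc m * w \<le> Suc (Suc m) * A"
      using \<open>w \<le> A\<close> by (intro mult_le_mono) simp_all
    also have "\<dots> \<le> Suc (Suc m) * A ^ 2"
      by (intro mult_le_mono2) (simp add: power2_eq_square le_square)
    also have "\<dots> \<le> T"
      by (simp add: T_def)
    finally show ?thesis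
      using \<open>A + T \<le> t\<close> by linarith
  qed simp
  moreover have "t = A + v + w" and "v \<le> T"
    using assms(1) by (auto simp: A_def v_def w_def)
  ultimately show ?thesis
    using that unfolding A_def T_def by blast
qed

lemma abs_deviation_Tmap:
  assumes "\<alpha> (Suc m) \<le> t" and "t \<le> \<alpha> (Suc (Suc m))"
  shows "\<bar>deviation 0 t (birk_avg f y (Suc m))\<bar>
           \<le> t * (\<epsilon> + (2 * real L * M + 14 * M) / Suc m) + 2 * M * (\<gamma> (Suc m) + \<gamma> (Suc (Suc m)))"
proof -
  define \<delta> where "\<delta> = \<epsilon> + (2 * real L * M + 2 * M) / Suc m"
  obtain v w where t: "t = \<alpha> (Suc m) + v + w"
    and v: "v \<le> \<gamma> (Suc (Suc m)) + \<alpha> (Suc m) ^ 2 * Suc (Suc m)" and w: "Suc m * w \<le> t"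
    using Tmap_prefix_split[OF assms] .
  have "\<bar>deviation 0 t (birk_avg f y (Suc m))\<bar>
      \<le> real (\<alpha> (Suc m) + v) * \<delta> + 2 * M * (2 * \<alpha> m + w + \<gamma> (Suc m) + \<gamma> (Suc (Suc m)) + 2 * m + 3)"
    unfolding t \<delta>_def by (rule abs_deviation_Tmap_prefix[OF v])
  also have "real (\<alpha> (Suc m) + v) * \<delta> \<le> t * \<delta>"
    using t \<epsilon>_nonneg M_nonneg by (intro mult_right_mono) (simp_all add: \<delta>_def)
  also have "2 * M * (2 * \<alpha> m + w + \<gamma> (Suc m) + \<gamma> (Suc (Suc m)) + 2 * m + 3)
      = 2 * M * (2 * \<alpha> m + w + 2 * m + 3) + 2 * M * (\<gamma> (Suc m) + \<gamma> (Suc (Suc m)))"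
    by (simp add: algebra_simps)
  also have "2 * M * (2 * \<alpha> m + w + 2 * m + 3) \<le> t * (12 * M / Suc m)"
  proof -
    have "real (Suc m) * (2 * \<alpha> m + w + 2 * m + 3) \<le> 6 * t"
      using Tmap_prefix_overhead[OF assms(1) w] by (simp only: of_nat_mult[symmetric] of_nat_le_iff)
    then have "2 * \<alpha> m + w + 2 * m + 3 \<le> 6 * t / Suc m"
      by (simp add: field_simps)
    then have "2 * M * (2 * \<alpha> m + w + 2 * m + 3) \<le> 2 * M * (6 * t / Suc m)"
      using M_nonneg by (intro mult_left_mono) simp_all
    then show ?thesis
      by (simp add: mult_ac)
  qed
  finally show ?thesis
    by (simp add: \<delta>_def algebra_simps add_divide_distrib)
qed

lemma abs_birk_avg_Tmap_diff:
  assumes "\<alpha> (Suc m) \<le> t" and "t \<le> \<alpha> (Suc (Suc m))"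
  shows "\<bar>birk_avg f x t - birk_avg f y (Suc m)\<bar>
           \<le> \<epsilon> + (2 * real L * M + 14 * M) / Suc m
              + 2 * M * (\<gamma> (Suc m) / \<alpha> m + \<gamma> (Suc (Suc m)) / \<alpha> (Suc m))"
proof -
  let ?c = "\<epsilon> + (2 * real L * M + 14 * M) / Suc m"
  have "0 < \<alpha> m"
    using length_Aseq_gt[of A1 m C y] A1_nonempty by linarith
  have "\<alpha> m \<le> \<alpha> (Suc m)"
    by (simp add: length_Aseq_Suc)
  with \<open>0 < \<alpha> m\<close> assms(1) have "0 < \<alpha> (Suc m)" and "0 < t" and "\<alpha> m \<le> t"
    by linarith+
  have "\<bar>birk_avg f x t - birk_avg f y (Suc m)\<bar> = \<bar>deviation 0 t (birk_avg f y (Suc m))\<bar> / t"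
    using \<open>0 < t\<close> by (simp add: birk_avg_diff_eq_deviation abs_div)
  also have "\<dots> \<le> (t * ?c + 2 * M * (\<gamma> (Suc m) + \<gamma> (Suc (Suc m)))) / t"
    by (intro divide_right_mono abs_deviation_Tmap assms) simp
  also have "\<dots> = ?c + 2 * M * (\<gamma> (Suc m) / t + \<gamma> (Suc (Suc m)) / t)"
    using \<open>0 < t\<close> by (simp add: field_simps)
  also have "\<dots> \<le> ?c + 2 * M * (\<gamma> (Suc m) / \<alpha> m + \<gamma> (Suc (Suc m)) / \<alpha> (Suc m))"
    using \<open>0 < \<alpha> m\<close> \<open>0 < \<alpha> (Suc m)\<close> \<open>0 < t\<close> \<open>\<alpha> m \<le> t\<close> assms(1) M_nonneg
    by (intro add_left_mono mult_left_mono add_mono divide_left_mono) simp_all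
  finally show ?thesis .
qed

end

lemma Tmap_birk_avg_tracks:
  assumes y: "y \<in> Sigma k" and A1: "A1 \<noteq> []" "set A1 \<subseteq> {..<k}"
    and C: "\<And>m. 0 < m \<Longrightarrow> set (C m) \<subseteq> {..<k}"
    and lim: "(\<lambda>n. real (length (C (Suc n))) / real (length (Aseq A1 C y n))) \<longlonglongrightarrow> 0"
    and f: "continuous_map (Sigma_top k) euclideanreal f" and "0 < e"
  shows "\<forall>\<^sub>F n in sequentially. \<forall>t\<in>{length (Aseq A1 C y n)..length (Aseq A1 C y (Suc n))}.
           \<bar>birk_avg f (Tmap A1 C y) t - birk_avg f y n\<bar> < e"
proof -
  obtain M where "0 \<le> M" and M: "\<And>u. u \<in> Sigma k \<Longrightarrow> \<bar>f u\<bar> \<le> M"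
    using continuous_map_Sigma_top_bounded[OF f] by blast
  obtain L where L: "\<And>u v. u \<in> Sigma k \<Longrightarrow> v \<in> Sigma k \<Longrightarrow> (\<And>j. j < L \<Longrightarrow> u j = v j) \<Longrightarrow>
                         \<bar>f u - f v\<bar> < e / 2"
    using continuous_map_Sigma_top_cylinder[OF f] \<open>0 < e\<close> by (metis half_gt_zero)
  interpret Tmap_comparison k f M "e / 2" L "Tmap A1 C y" y A1 C
    using Tmap_in_Sigma[OF A1 C y] y M L A1(1) by unfold_locales (auto intro: less_imp_le)
  define r where "r m = e / 2 + (2 * real L * M + 14 * M) / Suc m
    + 2 * M * (\<gamma> (Suc m) / \<alpha> m + \<gamma> (Suc (Suc m)) / \<alpha> (Suc m))" for m
  have "r \<longlonglongrightarrow> e / 2 + 0 + 2 * M * (0 + 0)"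
    unfolding r_def
    by (intro tendsto_intros lim LIMSEQ_Suc[OF lim] LIMSEQ_Suc[OF lim_const_over_n])
  then have "\<forall>\<^sub>F m in sequentially. r m < e"
    by (rule order_tendstoD(2)) (use \<open>0 < e\<close> in simp)
  then have "\<forall>\<^sub>F m in sequentially. \<forall>t\<in>{\<alpha> (Suc m)..\<alpha> (Suc (Suc m))}.
               \<bar>birk_avg f (Tmap A1 C y) t - birk_avg f y (Suc m)\<bar> < e"
    by (rule eventually_mono) (use abs_birk_avg_Tmap_diff r_def in fastforce)
  then show ?thesis
    by (rule eventually_sequentially_Suc[THEN iffD1])
qed

lemma strict_mono_interval_cover:
  fixes a :: "nat \<Rightarrow> nat"
  assumes "strict_mono a" and "a N \<le> t"
  obtains n where "N \<le> n" and "a n \<le> t" and "t \<le> a (Suc n)"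
proof -
  have "\<exists>n\<ge>N. a n \<le> t \<and> t \<le> a (Suc n)"
  proof (rule ccontr)
    assume gap: "\<not> ?thesis"
    have "a n \<le> t" if "N \<le> n" for n
      using that by (induction n rule: dec_induct) (use assms(2) gap in auto)
    then have "a (max N (Suc t)) \<le> t"
      by simp
    moreover have "max N (Suc t) \<le> a (max N (Suc t))"
      using assms(1) by (rule strict_mono_imp_increasing)
    ultimately show False
      by simp
  qed
  then show ?thesis
    using that by blast
qed

context
  fixes u v :: "'f \<Rightarrow> nat \<Rightarrow> real" and a :: "nat \<Rightarrow> nat" and F :: "'f set"
  assumes a: "strict_mono a"
    and track: "\<And>e. 0 < e \<Longrightarrow>
      \<forall>\<^sub>F n in sequentially. \<forall>t\<in>{a n..a (Suc n)}. \<forall>f\<in>F. \<bar>u f t - v f n\<bar> < e"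
begin

lemma frequently_near_tracked_if_tracking:
  assumes u_near: "\<forall>e>0. \<exists>\<^sub>F t in sequentially. \<forall>f\<in>F. \<bar>u f t - c f\<bar> < e" and "0 < e"
  shows "\<exists>\<^sub>F n in sequentially. \<forall>f\<in>F. \<bar>v f n - c f\<bar> < e"
proof -
  obtain N where N: "\<And>n t f. N \<le> n \<Longrightarrow> t \<in> {a n..a (Suc n)} \<Longrightarrow> f \<in> F \<Longrightarrow> \<bar>u f t - v f n\<bar> < e / 2"
    using track[OF half_gt_zero[OF \<open>0 < e\<close>]] unfolding eventually_sequentially by blast
  show "\<exists>\<^sub>F n in sequentially. \<forall>f\<in>F. \<bar>v f n - c f\<bar> < e"
    unfolding frequently_sequentially
  proof
    fix N'
    have "\<exists>t\<ge>a (max N N'). \<forall>f\<in>F. \<bar>u f t - c f\<bar> < e / 2"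
      using u_near half_gt_zero[OF \<open>0 < e\<close>] unfolding frequently_sequentially by blast
    then obtain t where "a (max N N') \<le> t" and t: "\<forall>f\<in>F. \<bar>u f t - c f\<bar> < e / 2"
      by blast
    obtain n where "max N N' \<le> n" and "a n \<le> t" and "t \<le> a (Suc n)"
      using strict_mono_interval_cover[OF a \<open>a (max N N') \<le> t\<close>] .
    have "\<bar>v f n - c f\<bar> < e" if "f \<in> F" for f
    proof -
      have "\<bar>u f t - v f n\<bar> < e / 2"
        using N that \<open>max N N' \<le> n\<close> \<open>a n \<le> t\<close> \<open>t \<le> a (Suc n)\<close> by simp
      with bspec[OF t that] show ?thesis
        by linarith
    qed
    with \<open>max N N' \<le> n\<close> show "\<exists>n\<ge>N'. \<forall>f\<in>F. \<bar>v f n - c f\<bar> < e"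
      by auto
  qed
qed

lemma frequently_near_tracking_if_tracked:
  assumes v_near: "\<forall>e>0. \<exists>\<^sub>F n in sequentially. \<forall>f\<in>F. \<bar>v f n - c f\<bar> < e" and "0 < e"
  shows "\<exists>\<^sub>F t in sequentially. \<forall>f\<in>F. \<bar>u f t - c f\<bar> < e"
proof -
  obtain N where N: "\<And>n t f. N \<le> n \<Longrightarrow> t \<in> {a n..a (Suc n)} \<Longrightarrow> f \<in> F \<Longrightarrow> \<bar>u f t - v f n\<bar> < e / 2"
    using track[OF half_gt_zero[OF \<open>0 < e\<close>]] unfolding eventually_sequentially by blast
  show "\<exists>\<^sub>F t in sequentially. \<forall>f\<in>F. \<bar>u f t - c f\<bar> < e"
    unfolding frequently_sequentially
  proof
    fix N'
    have "\<exists>n\<ge>max N N'. \<forall>f\<in>F. \<bar>v f n - c f\<bar> < e / 2"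
      using v_near half_gt_zero[OF \<open>0 < e\<close>] unfolding frequently_sequentially by blast
    then obtain n where "max N N' \<le> n" and n: "\<forall>f\<in>F. \<bar>v f n - c f\<bar> < e / 2"
      by blast
    have "n \<le> a n" and "a n \<le> a (Suc n)"
      using a by (simp_all add: strict_mono_imp_increasing strict_mono_less_eq)
    have "\<bar>u f (a n) - c f\<bar> < e" if "f \<in> F" for f
    proof -
      have "\<bar>u f (a n) - v f n\<bar> < e / 2"
        using N that \<open>max N N' \<le> n\<close> \<open>a n \<le> a (Suc n)\<close> by simp
      with bspec[OF n that] show ?thesis
        by linarith
    qed
    with \<open>max N N' \<le> n\<close> \<open>n \<le> a n\<close> show "\<exists>t\<ge>N'. \<forall>f\<in>F. \<bar>u f t - c f\<bar> < e"
      by (intro exI[of _ "a n"]) auto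
  qed
qed

lemma frequently_near_iff_tracking:
  "(\<forall>e>0. \<exists>\<^sub>F t in sequentially. \<forall>f\<in>F. \<bar>u f t - c f\<bar> < e)
   \<longleftrightarrow> (\<forall>e>0. \<exists>\<^sub>F n in sequentially. \<forall>f\<in>F. \<bar>v f n - c f\<bar> < e)"
  using frequently_near_tracked_if_tracking frequently_near_tracking_if_tracked by meson

end

lemma Vset_eq_if_tracking:
  fixes a :: "nat \<Rightarrow> nat"
  assumes "strict_mono a"
    and "\<And>f e. continuous_map (Sigma_top k) euclideanreal f \<Longrightarrow> 0 < e \<Longrightarrow>
           \<forall>\<^sub>F n in sequentially. \<forall>t\<in>{a n..a (Suc n)}. \<bar>birk_avg f x t - birk_avg f y n\<bar> < e"
  shows "Vset k x = Vset k y"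
proof -
  have "(\<forall>e>0. \<exists>\<^sub>F t in sequentially. \<forall>f\<in>F. \<bar>birk_avg f x t - integral\<^sup>L \<mu> f\<bar> < e)
        \<longleftrightarrow> (\<forall>e>0. \<exists>\<^sub>F n in sequentially. \<forall>f\<in>F. \<bar>birk_avg f y n - integral\<^sup>L \<mu> f\<bar> < e)"
    if "finite F" and "F \<subseteq> {f. continuous_map (Sigma_top k) euclideanreal f}" for F \<mu>
  proof (rule frequently_near_iff_tracking[OF assms(1)])
    fix e :: real
    assume "0 < e"
    with assms(2) that(2) have each: "\<forall>f\<in>F. \<forall>\<^sub>F n in sequentially.
        \<forall>t\<in>{a n..a (Suc n)}. \<bar>birk_avg f x t - birk_avg f y n\<bar> < e"
      by auto
    show "\<forall>\<^sub>F n in sequentially. \<forall>t\<in>{a n..a (Suc n)}. \<forall>f\<in>F. \<bar>birk_avg f x t - birk_avg f y n\<bar> < e"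
      using eventually_ball_finite[OF \<open>finite F\<close> each] by (rule eventually_mono) blast
  qed
  then show ?thesis
    unfolding Vset_def by (simp cong: imp_cong)
qed

lemma set_subset_if_contained:
  assumes "P \<subseteq> Sigma k" and "contained P w"
  shows "set w \<subseteq> {..<k}"
proof
  fix c
  assume "c \<in> set w"
  then obtain i where "i < length w" and "w ! i = c"
    by (auto simp: in_set_conv_nth)
  moreover obtain z where "z \<in> P" and "\<forall>i<length w. z i = w ! i"
    using assms(2) by (auto simp: contained_def)
  moreover have "z i < k"
    using assms(1) \<open>z \<in> P\<close> by (auto simp: Sigma_def)
  ultimately show "c \<in> {..<k}"
    by simp
qed

theorem proposition3p5:
  fixes k :: nat and P :: "(nat \<Rightarrow> nat) set" and C :: "nat \<Rightarrow> nat list" and A1 :: "nat list"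
  assumes "k \<ge> 2"
    and "subshift k P" and "P \<noteq> Sigma k"
    and "bij_betw C {1..} {w. w \<noteq> [] \<and> contained P w}"
    and "set A1 \<subseteq> {..<k}" and "\<not> contained P A1"
    and "\<And>y. y \<in> P \<Longrightarrow>
           ((\<lambda>n. real (length (C (Suc n))) / real (length (Aseq A1 C y n))) \<longlongrightarrow> 0) sequentially"
  shows "\<forall>y\<in>P. Vset k (Tmap A1 C y) = Vset k y"
proof
  \<comment> \<open>k \<ge> 2 and P \<noteq> Sigma k only serve to guarantee that a word A1 as assumed exists\<close>
  fix y
  assume "y \<in> P"
  have "P \<noteq> {}" and "P \<subseteq> Sigma k"
    using assms(2) by (auto simp: subshift_def)
  then have "y \<in> Sigma k" and "A1 \<noteq> []"
    using \<open>y \<in> P\<close> assms(6) by (auto simp: contained_def)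
  have "set (C m) \<subseteq> {..<k}" if "0 < m" for m
    using bij_betw_apply[OF assms(4)] that set_subset_if_contained[OF \<open>P \<subseteq> Sigma k\<close>] by auto
  with \<open>y \<in> Sigma k\<close> \<open>A1 \<noteq> []\<close> assms(5) assms(7)[OF \<open>y \<in> P\<close>]
  show "Vset k (Tmap A1 C y) = Vset k y"
    by (intro Vset_eq_if_tracking[OF strict_mono_length_Aseq[of A1 C y]] Tmap_birk_avg_tracks)
qed

end
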